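(* Let $\alpha$ be an automorphism of a group $C$ with $\alpha^2=1$. If $Z^1_\alpha(C)$ is 2-divisible, then $H^1_\alpha(C)=\{1\}$. If $C$ is strongly 2-divisible, then $Z^1_\alpha(C)$ is also strongly 2-divisible, and consequently $H^1_\alpha(C)=\{1\}$.
   Context: A subset $S$ of a group is 2-divisible if every $s\in S$ equals $t^2$ for some $t\in S$; a group $C$ is strongly 2-divisible if every element has a unique square root in $C$. $Z^1_\alpha(C)=\{z\in C:\alpha(z)=z^{-1}\}$ and $H^1_\alpha(C)$ is the set of $C$-orbits in $Z^1_\alpha(C)$ under $x\cdot z=xz\alpha(x)^{-1}$; $H^1_\alpha(C)=\{1\}$ means $Z^1_\alpha(C)=\{y\alpha(y)^{-1}:y\in C\}$. *)

theory Defs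
  imports "HOL-Algebra.Group"
begin

definition two_divisible :: "('a, 'b) monoid_scheme \<Rightarrow> 'a set \<Rightarrow> bool" where
  "two_divisible C S \<longleftrightarrow> (\<forall>s\<in>S. \<exists>t\<in>S. s = t \<otimes>\<^bsub>C\<^esub> t)"

definition strongly_two_divisible_set :: "('a, 'b) monoid_scheme \<Rightarrow> 'a set \<Rightarrow> bool" where
  "strongly_two_divisible_set C S \<longleftrightarrow> (\<forall>s\<in>S. \<exists>!t. t \<in> S \<and> t \<otimes>\<^bsub>C\<^esub> t = s)"

definition strongly_two_divisible :: "('a, 'b) monoid_scheme \<Rightarrow> bool" where
  "strongly_two_divisible C \<longleftrightarrow> strongly_two_divisible_set C (carrier C)"

definition Z1 :: "('a, 'b) monoid_scheme \<Rightarrow> ('a \<Rightarrow> 'a) \<Rightarrow> 'a set" where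
  "Z1 C \<alpha> = {z \<in> carrier C. \<alpha> z = inv\<^bsub>C\<^esub> z}"

definition twisted_orbit :: "('a, 'b) monoid_scheme \<Rightarrow> ('a \<Rightarrow> 'a) \<Rightarrow> 'a \<Rightarrow> 'a set" where
  "twisted_orbit C \<alpha> z = {x \<otimes>\<^bsub>C\<^esub> z \<otimes>\<^bsub>C\<^esub> inv\<^bsub>C\<^esub> (\<alpha> x) | x. x \<in> carrier C}"

definition H1 :: "('a, 'b) monoid_scheme \<Rightarrow> ('a \<Rightarrow> 'a) \<Rightarrow> 'a set set" where
  "H1 C \<alpha> = twisted_orbit C \<alpha> ` Z1 C \<alpha>"

end

theory Submission
  imports Defs
begin

text \<open>A square t \<otimes> t of a cocycle t is the image of \<one> under the twisted action of t, so it
  lies in the trivial orbit; 2-divisibility of Z1 thus puts every cocycle there. For strong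
  2-divisibility, the square root t of a cocycle z has a second square root inv (\<alpha> t) in C,
  so uniqueness forces \<alpha> t = inv t, i.e. the root is itself a cocycle. Both arguments only
  use that \<alpha> is an endomorphism.\<close>

lemma two_divisible_if_strongly_two_divisible_set:
  "strongly_two_divisible_set C S \<Longrightarrow> two_divisible C S"
  unfolding strongly_two_divisible_set_def two_divisible_def by metis

lemma one_in_Z1:
  assumes "group_hom C C \<alpha>"
  shows "\<one>\<^bsub>C\<^esub> \<in> Z1 C \<alpha>"
proof -
  interpret group_hom C C \<alpha> by fact
  show ?thesis unfolding Z1_def by simp
qed

lemma twisted_action_mult:
  fixes C (structure)
  assumes "group_hom C C \<alpha>" and "x \<in> carrier C" "y \<in> carrier C" "z \<in> carrier C"
  shows "x \<otimes> (y \<otimes> z \<otimes> inv (\<alpha> y)) \<otimes> inv (\<alpha> x) = (x \<otimes> y) \<otimes> z \<otimes> inv (\<alpha> (x \<otimes> y))"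
proof -
  interpret group_hom C C \<alpha> by fact
  show ?thesis using assms(2-4) by (simp add: G.m_assoc G.inv_mult_group)
qed

lemma twisted_orbit_eq_image:
  "twisted_orbit C \<alpha> z = (\<lambda>x. x \<otimes>\<^bsub>C\<^esub> z \<otimes>\<^bsub>C\<^esub> inv\<^bsub>C\<^esub> (\<alpha> x)) ` carrier C"
  unfolding twisted_orbit_def by blast

lemma twisted_orbit_twisted_action:
  fixes C (structure)
  assumes hom: "group_hom C C \<alpha>" and y: "y \<in> carrier C" and z: "z \<in> carrier C"
  shows "twisted_orbit C \<alpha> (y \<otimes> z \<otimes> inv (\<alpha> y)) = twisted_orbit C \<alpha> z"
  unfolding twisted_orbit_eq_image
proof (intro equalityI image_subsetI)
  interpret group_hom C C \<alpha> by fact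
  fix x assume x: "x \<in> carrier C"
  show "x \<otimes> (y \<otimes> z \<otimes> inv (\<alpha> y)) \<otimes> inv (\<alpha> x) \<in> (\<lambda>x. x \<otimes> z \<otimes> inv (\<alpha> x)) ` carrier C"
    by (rule image_eqI[where x = "x \<otimes> y"]) (simp_all add: twisted_action_mult[OF hom x y z] x y)
  have "x \<otimes> z \<otimes> inv (\<alpha> x) = (x \<otimes> inv y) \<otimes> (y \<otimes> z \<otimes> inv (\<alpha> y)) \<otimes> inv (\<alpha> (x \<otimes> inv y))"
    using twisted_action_mult[OF hom _ y z, of "x \<otimes> inv y"] x y by (simp add: G.m_assoc)
  then show "x \<otimes> z \<otimes> inv (\<alpha> x) \<in> (\<lambda>x. x \<otimes> (y \<otimes> z \<otimes> inv (\<alpha> y)) \<otimes> inv (\<alpha> x)) ` carrier C"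
    by (rule image_eqI) (use x y in simp)
qed

lemma twisted_orbit_square_Z1:
  fixes C (structure)
  assumes hom: "group_hom C C \<alpha>" and t: "t \<in> Z1 C \<alpha>"
  shows "twisted_orbit C \<alpha> (t \<otimes> t) = twisted_orbit C \<alpha> \<one>"
proof -
  interpret group_hom C C \<alpha> by fact
  have "t \<in> carrier C" and "\<alpha> t = inv t" using t unfolding Z1_def by auto
  then have "t \<otimes> t = t \<otimes> \<one> \<otimes> inv (\<alpha> t)" by simp
  then have "twisted_orbit C \<alpha> (t \<otimes> t) = twisted_orbit C \<alpha> (t \<otimes> \<one> \<otimes> inv (\<alpha> t))"
    by (rule arg_cong)
  also have "\<dots> = twisted_orbit C \<alpha> \<one>"
    using twisted_orbit_twisted_action[OF hom \<open>t \<in> carrier C\<close>] by simp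
  finally show ?thesis .
qed

lemma H1_trivial_if_two_divisible_Z1:
  fixes C (structure)
  assumes hom: "group_hom C C \<alpha>" and div: "two_divisible C (Z1 C \<alpha>)"
  shows "H1 C \<alpha> = {twisted_orbit C \<alpha> \<one>}"
proof -
  have "twisted_orbit C \<alpha> z = twisted_orbit C \<alpha> \<one>" if "z \<in> Z1 C \<alpha>" for z
  proof -
    have "\<exists>t\<in>Z1 C \<alpha>. z = t \<otimes> t"
      using div that unfolding two_divisible_def by (rule bspec)
    then obtain t where "t \<in> Z1 C \<alpha>" "z = t \<otimes> t" ..
    then show ?thesis using twisted_orbit_square_Z1[OF hom] by blast
  qed
  then have "H1 C \<alpha> = (\<lambda>_. twisted_orbit C \<alpha> \<one>) ` Z1 C \<alpha>"
    unfolding H1_def by (rule image_cong[OF refl])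
  also have "\<dots> = {twisted_orbit C \<alpha> \<one>}"
    using one_in_Z1[OF hom] by (rule image_constant)
  finally show ?thesis .
qed

lemma strongly_two_divisible_set_Z1:
  fixes C (structure)
  assumes hom: "group_hom C C \<alpha>" and sd: "strongly_two_divisible C"
  shows "strongly_two_divisible_set C (Z1 C \<alpha>)"
  unfolding strongly_two_divisible_set_def
proof
  interpret group_hom C C \<alpha> by fact
  fix z assume "z \<in> Z1 C \<alpha>"
  then have z: "z \<in> carrier C" "\<alpha> z = inv z" unfolding Z1_def by auto
  have "\<exists>!t. t \<in> carrier C \<and> t \<otimes> t = z"
    using sd z(1) unfolding strongly_two_divisible_def strongly_two_divisible_set_def by blast
  then obtain t where t: "t \<in> carrier C" "t \<otimes> t = z"
    and unique: "\<And>u. u \<in> carrier C \<Longrightarrow> u \<otimes> u = z \<Longrightarrow> u = t"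
    by blast
  have "inv (\<alpha> t) \<otimes> inv (\<alpha> t) = inv (\<alpha> t \<otimes> \<alpha> t)"
    using t(1) by (simp add: G.inv_mult_group)
  also have "\<dots> = z" using t z by (simp flip: hom_mult)
  finally have "inv (\<alpha> t) = t" using t(1) by (intro unique) auto
  then have "\<alpha> t = inv t" using t(1) by (metis G.inv_inv hom_closed)
  with t have "t \<in> Z1 C \<alpha>" unfolding Z1_def by simp
  then show "\<exists>!t. t \<in> Z1 C \<alpha> \<and> t \<otimes> t = z"
    using t unique unfolding Z1_def by blast
qed

theorem lemma2p11:
  fixes C (structure) and \<alpha> :: "'a \<Rightarrow> 'a"
  assumes "group C"
    and "\<alpha> \<in> iso C C"
    and "\<forall>x\<in>carrier C. \<alpha> (\<alpha> x) = x"
  shows "(two_divisible C (Z1 C \<alpha>) \<longrightarrow> H1 C \<alpha> = {twisted_orbit C \<alpha> \<one>})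
       \<and> (strongly_two_divisible C \<longrightarrow>
            strongly_two_divisible_set C (Z1 C \<alpha>) \<and> H1 C \<alpha> = {twisted_orbit C \<alpha> \<one>})"
proof -
  have hom: "group_hom C C \<alpha>"
    using assms(1,2) by (simp add: group_hom_def group_hom_axioms_def iso_def)
  show ?thesis
    using H1_trivial_if_two_divisible_Z1[OF hom] strongly_two_divisible_set_Z1[OF hom]
      two_divisible_if_strongly_two_divisible_set by blast
qed

end
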